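(* Let $\ell\ge 1$ be an integer and let $P$ be a set of $n_\ell$ points. There exists a set system $\mathcal{Q}\subseteq 2^P$ such that: (1) $\mathcal{Q}$ consists of exactly $\lceil n_{\ell-1}/2\rceil+1$ sets, each of size $n_{\ell-1}$; (2) for every $p\in P$ there is a set in $\mathcal{Q}$ not containing $p$; (3) for every $p\in P$ there is a $q\in P$ such that every set in $\mathcal{Q}$ contains at least one of $p$ and $q$.
   Context: The sequence $n_0,n_1,\ldots$ is defined by $n_0=1$ and, for $i>0$, $n_i=\left(\lceil n_{i-1}/2\rceil+1\right)\cdot\left(\lfloor n_{i-1}/2\rfloor+1\right)$. *)

theory Defs
  imports Main
begin

text \<open>The sequence n_0 = 1, n_i = (ceil(n_{i-1}/2)+1) * (floor(n_{i-1}/2)+1).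
  For natural m, ceil(m/2) = (m+1) div 2 and floor(m/2) = m div 2.\<close>
fun nseq :: "nat \<Rightarrow> nat" where
  "nseq 0 = 1"
| "nseq (Suc i) = ((nseq i + 1) div 2 + 1) * (nseq i div 2 + 1)"

end

theory Submission
  imports Defs
begin

text \<open>Write \<open>m = n\<^sub>l\<^sub>-\<^sub>1\<close>, so that \<open>n\<^sub>l = A * B\<close> with \<open>A = \<lceil>m/2\<rceil> + 1\<close>, \<open>B = \<lfloor>m/2\<rfloor> + 1\<close> and
  \<open>A + B - 2 = m\<close>. Arrange \<open>P\<close> as an \<open>A \<times> B\<close> grid with a distinguished bottom row. For each
  column \<open>k\<close> take the bottom row without its cell in column \<open>k\<close>, together with the rest of
  column \<open>k\<close>: these \<open>A\<close> sets have \<open>(A - 1) + (B - 1) = m\<close> points. A bottom cell is missed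
  by the set of its own column and pairs with any other bottom cell (every set omits at most
  one bottom cell); a higher cell of column \<open>k\<close> is missed by the set of any other column and
  pairs with the bottom cell of column \<open>k\<close>.\<close>

definition pair_transversal_system :: "'a set \<Rightarrow> nat \<Rightarrow> nat \<Rightarrow> 'a set set \<Rightarrow> bool" where
  "pair_transversal_system P m s Q \<longleftrightarrow> Q \<subseteq> Pow P \<and> card Q = m \<and> (\<forall>S\<in>Q. card S = s)
     \<and> (\<forall>p\<in>P. \<exists>S\<in>Q. p \<notin> S) \<and> (\<forall>p\<in>P. \<exists>q\<in>P. \<forall>S\<in>Q. p \<in> S \<or> q \<in> S)"

lemma pair_transversal_system_bij_betw:
  assumes f: "bij_betw f D P" and Q: "pair_transversal_system D m s Q"
  shows "pair_transversal_system P m s ((`) f ` Q)"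
proof -
  have inj: "inj_on f D" and img: "f ` D = P" using f by (auto simp: bij_betw_def)
  have QD: "Q \<subseteq> Pow D" and cQ: "card Q = m" and cS: "\<forall>S\<in>Q. card S = s"
    and avoid: "\<forall>x\<in>D. \<exists>S\<in>Q. x \<notin> S" and pair: "\<forall>x\<in>D. \<exists>y\<in>D. \<forall>S\<in>Q. x \<in> S \<or> y \<in> S"
    using Q by (simp_all add: pair_transversal_system_def)
  have mem: "f x \<in> f ` S \<longleftrightarrow> x \<in> S" if "x \<in> D" "S \<in> Q" for x S
    using inj_on_image_mem_iff[OF inj] that QD by blast
  have "(`) f ` Q \<subseteq> Pow P" using QD img by blast
  moreover have "card ((`) f ` Q) = m"
    using card_image[OF inj_on_subset[OF inj_on_image_Pow[OF inj] QD]] cQ by simp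
  moreover have "card (f ` S) = s" if "S \<in> Q" for S
  proof -
    have "S \<subseteq> D" using that QD by blast
    then show ?thesis using card_image[OF inj_on_subset[OF inj]] cS that by simp
  qed
  moreover have "\<exists>T\<in>(`) f ` Q. p \<notin> T" if "p \<in> P" for p
  proof -
    obtain x S where "x \<in> D" "p = f x" "S \<in> Q" "x \<notin> S"
      using \<open>p \<in> P\<close> img avoid by blast
    then show ?thesis using mem by blast
  qed
  moreover have "\<exists>q\<in>P. \<forall>T\<in>(`) f ` Q. p \<in> T \<or> q \<in> T" if "p \<in> P" for p
  proof -
    obtain x y where "x \<in> D" "p = f x" "y \<in> D" "\<forall>S\<in>Q. x \<in> S \<or> y \<in> S"
      using \<open>p \<in> P\<close> img pair by blast
    then show ?thesis using mem img by blast
  qed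
  ultimately show ?thesis by (simp add: pair_transversal_system_def)
qed

lemma pair_transversal_system_card_eq:
  assumes "finite D" "finite P" "card P = card D" "pair_transversal_system D m s Q"
  shows "\<exists>Q'. pair_transversal_system P m s Q'"
proof -
  obtain f where "bij_betw f D P"
    using assms(1-3) finite_same_card_bij by metis
  then show ?thesis using pair_transversal_system_bij_betw assms(4) by blast
qed

definition grid_set :: "nat \<Rightarrow> nat \<Rightarrow> nat \<Rightarrow> (nat \<times> nat) set" where
  "grid_set a b k = ({..<a} - {k}) \<times> {0} \<union> {k} \<times> {1..<b}"

lemma grid_set_subset: "k < a \<Longrightarrow> b \<ge> 1 \<Longrightarrow> grid_set a b k \<subseteq> {..<a} \<times> {..<b}"
  by (auto simp: grid_set_def)

lemma card_grid_set:
  assumes "k < a" "b \<ge> 1"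
  shows "card (grid_set a b k) = a + b - 2"
proof -
  have "card (grid_set a b k) = card (({..<a} - {k}) \<times> {0::nat}) + card ({k} \<times> {1..<b})"
    unfolding grid_set_def by (rule card_Un_disjoint) auto
  also have "\<dots> = (a - 1) + (b - 1)" using assms(1) by (simp add: card_cartesian_product)
  finally show ?thesis using assms by simp
qed

lemma inj_on_grid_set: "inj_on (grid_set a b) {..<a}"
proof (rule inj_onI)
  fix i j assume "i \<in> {..<a}" and eq: "grid_set a b i = grid_set a b j"
  have "(i, 0) \<notin> grid_set a b i" by (simp add: grid_set_def)
  moreover have "(i, 0) \<in> grid_set a b j" if "i \<noteq> j"
    using \<open>i \<in> {..<a}\<close> that by (simp add: grid_set_def)
  ultimately show "i = j" using eq by blast
qed

lemma mem_grid_set: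
  "(r, c) \<in> grid_set a b k \<longleftrightarrow> c = 0 \<and> r < a \<and> r \<noteq> k \<or> r = k \<and> 1 \<le> c \<and> c < b"
  by (auto simp: grid_set_def)

lemma pair_transversal_system_grid:
  assumes "a \<ge> 2" "b \<ge> 1"
  shows "pair_transversal_system ({..<a} \<times> {..<b}) a (a + b - 2) (grid_set a b ` {..<a})"
  unfolding pair_transversal_system_def
proof (intro conjI ballI)
  show "grid_set a b ` {..<a} \<subseteq> Pow ({..<a} \<times> {..<b})"
    using grid_set_subset assms(2) by blast
  show "card (grid_set a b ` {..<a}) = a"
    by (simp add: card_image inj_on_grid_set)
  show "card S = a + b - 2" if "S \<in> grid_set a b ` {..<a}" for S
    using that card_grid_set assms(2) by auto
next
  fix x assume "x \<in> {..<a} \<times> {..<b}"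
  then obtain r c where x: "x = (r, c)" "r < a" "c < b" by auto
  define k :: nat where "k = (if r = 0 then 1 else 0)"
  have k: "k < a" "k \<noteq> r" using assms(1) by (auto simp: k_def)
  show "\<exists>S\<in>grid_set a b ` {..<a}. x \<notin> S"
  proof (cases "c = 0")
    case True
    then show ?thesis using x by (auto simp: mem_grid_set)
  next
    case False
    then show ?thesis using x k by (auto simp: mem_grid_set)
  qed
  show "\<exists>y\<in>{..<a} \<times> {..<b}. \<forall>S\<in>grid_set a b ` {..<a}. x \<in> S \<or> y \<in> S"
  proof (cases "c = 0")
    case True
    then have "\<forall>j<a. x \<in> grid_set a b j \<or> (k, 0) \<in> grid_set a b j"
      using x k by (auto simp: mem_grid_set)
    then show ?thesis using k assms(2) by force
  next
    case False
    then have "\<forall>j<a. x \<in> grid_set a b j \<or> (r, 0) \<in> grid_set a b j"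
      using x by (auto simp: mem_grid_set)
    then show ?thesis using x assms(2) by force
  qed
qed

lemma nseq_pos: "nseq i \<ge> 1"
  by (induction i) auto

theorem lemma3:
  fixes P :: "'a set" and l :: nat
  assumes "l \<ge> 1" and "finite P" and "card P = nseq l"
  shows "\<exists>Q :: 'a set set. Q \<subseteq> Pow P
    \<and> card Q = (nseq (l - 1) + 1) div 2 + 1
    \<and> (\<forall>S\<in>Q. card S = nseq (l - 1))
    \<and> (\<forall>p\<in>P. \<exists>S\<in>Q. p \<notin> S)
    \<and> (\<forall>p\<in>P. \<exists>q\<in>P. \<forall>S\<in>Q. p \<in> S \<or> q \<in> S)"
proof -
  define m where "m = nseq (l - 1)"
  define a b where "a = (m + 1) div 2 + 1" and "b = m div 2 + 1"
  have "l = Suc (l - 1)" using assms(1) by simp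
  then have "card P = a * b"
    using assms(3) by (metis a_def b_def m_def nseq.simps(2))
  moreover have "a \<ge> 2" "a + b - 2 = m"
    using nseq_pos[of "l - 1"] by (simp_all add: a_def b_def m_def)
  moreover have "pair_transversal_system ({..<a} \<times> {..<b}) a (a + b - 2) (grid_set a b ` {..<a})"
    using \<open>a \<ge> 2\<close> by (intro pair_transversal_system_grid) (simp_all add: b_def)
  ultimately have "\<exists>Q. pair_transversal_system P a m Q"
    by (intro pair_transversal_system_card_eq[OF _ assms(2)]) (simp_all add: card_cartesian_product)
  then show ?thesis by (simp add: pair_transversal_system_def a_def m_def)
qed

end
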